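(* There is an absolute constant $d$ such that the following holds. Let $N>0$ and let $A,B\ge 0$ be integers with $A+B=N$. Let $X$ be chosen uniformly at random among all strings in $\{0,1\}^N$ with exactly $A$ ones and $B$ zeros. Then for every $r\ge 1$, $$\Pr_X\left[\,C_{OP}(X)\ \ge\ N-\tfrac{2}{3}\min(A,B)+d\sqrt{rN}\,\right]\ \le\ 2^{-r}\log N .$$
   Context: Logarithms are base $2$. The oblivious-pairing algorithm on input $X=X_0\cdots X_{N-1}\in\{0,1\}^N$ maintains a list $\mathcal S=(S_1,\dots,S_\ell)$ of disjoint subsets of $\{0,\dots,N-1\}$ ("blocks"), each known to be homogeneous (all bits of $X$ indexed by it are equal); $X_{S_j}$ denotes the common value of the bits in $S_j$. Initially $\mathcal S=(\{0\},\{1\},\dots,\{N-1\})$. The operation COMBINE$(\mathcal S,i)$ queries $X_a\oplus X_b$ for some $a\in S_i$, $b\in S_{i+1}$; if the answer is $0$ it replaces $S_i,S_{i+1}$ in the list by the single block $S_i\cup S_{i+1}$ (at that position), and otherwise it removes both $S_i$ and $S_{i+1}$ from the list. The algorithm runs, for $k=1,2,\dots,\lfloor\log N\rfloor$ in turn: while there exists $j$ with $1\le j<\ell$ and $|S_j|=|S_{j+1}|=2^{k-1}$, apply COMBINE$(\mathcal S,j)$ for the smallest such $j$. At the end it outputs "tie" if the list is empty and otherwise $X_{S_1}$. $C_{OP}(X)$ denotes the number of XOR queries (COMBINE operations) the oblivious-pairing algorithm makes on input $X$. *)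

theory Defs
  imports Complex_Main
begin

text \<open>Oblivious pairing. An input string X in {0,1}^N is a bool list of length N
  (True = 1). Blocks are sets of indices; the list of blocks is a list of nat sets.\<close>

text \<open>COMBINE on two adjacent blocks S, T: query X_a xor X_b for a = Min S, b = Min T.
  Answer 0 (equal bits): merge into S \<union> T; answer 1: remove both.\<close>
definition op_combine :: "bool list \<Rightarrow> nat set \<Rightarrow> nat set \<Rightarrow> nat set list" where
  "op_combine X S T = (if (X ! Min S) = (X ! Min T) then [S \<union> T] else [])"

fun op_step :: "bool list \<Rightarrow> nat \<Rightarrow> nat set list \<Rightarrow> nat set list option" where
  "op_step X s (S # T # rest) =
     (if card S = s \<and> card T = s then Some (op_combine X S T @ rest)
      else map_option ((#) S) (op_step X s (T # rest)))"
| "op_step X s _ = None"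

lemma op_step_length: "op_step X s L = Some L' \<Longrightarrow> length L' < length L"
  by (induction X s L arbitrary: L' rule: op_step.induct)
     (auto simp: op_combine_def split: if_splits)

function op_phase :: "bool list \<Rightarrow> nat \<Rightarrow> nat set list \<Rightarrow> nat set list \<times> nat" where
  "op_phase X s L = (case op_step X s L of
      None \<Rightarrow> (L, 0)
    | Some L' \<Rightarrow> (let (L'', c) = op_phase X s L' in (L'', Suc c)))"
  by pat_completeness auto
termination
  by (relation "measure (\<lambda>(X, s, L). length L)") (auto dest: op_step_length)

definition op_run :: "bool list \<Rightarrow> nat set list \<times> nat" where
  "op_run X = foldl (\<lambda>(L, c) k. let (L', c') = op_phase X (2 ^ (k - 1)) L in (L', c + c'))
      (map (\<lambda>i. {i}) [0..<length X], 0)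
      [1..<nat \<lfloor>log 2 (real (length X))\<rfloor> + 1]"

definition C_OP :: "bool list \<Rightarrow> nat" where
  "C_OP X = snd (op_run X)"

definition strings_with_ones :: "nat \<Rightarrow> nat \<Rightarrow> bool list set" where
  "strings_with_ones N A = {X. length X = N \<and> count_list X True = A}"

end

theory Submission
  imports Defs
begin

(* On the values of its blocks, phase k of oblivious pairing performs one pairing round on the
   string Y_k = pair_round^(k-1) X: equal pairs merge, unequal pairs cancel, and an odd last block
   waits. Hence C_OP X is the sum of |Y_k| div 2 over the floor(log N) phases, and since every
   cancellation removes two positions for good, C_OP X <= N - sum_k m_k, where m_k is the number
   of mismatched pairs in round k. The minority count obeys
   minority(Y_k) <= 2 minority(Y_(k+1)) + m_k + 1, so as long as every round cancels half of its
   minority up to an error 30 sqrt(r |Y_k|), the m_k add up to 2/3 min(A, B) - O(sqrt(r N)),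
   because the lengths halve.

   For X uniform with A ones, Y_(k+1) conditioned on its length and its number of ones is again
   uniform, so it suffices to look at one round. Among the strings of p pairs with a ones, those
   whose round keeps q ones number (p choose q) ((p - q) choose R) 2^R with R = a - 2q mismatched
   pairs; the ratio of consecutive terms yields a tail exp(-t^2 / (8a)) for a deficit t, which is
   2^(-r) for t of order sqrt(r N). A union bound over the rounds gives the factor log N. *)

section \<open>Oblivious pairing as iterated pairing rounds\<close>

fun pair_round :: "bool list \<Rightarrow> bool list" where
  "pair_round (x # y # Y) = (if x = y then x # pair_round Y else pair_round Y)"
| "pair_round _ = []"

definition uniform_block :: "bool list \<Rightarrow> nat \<Rightarrow> nat set \<Rightarrow> bool \<Rightarrow> bool" where
  "uniform_block X s B b \<longleftrightarrow> card B = s \<and> (\<forall>i\<in>B. X ! i = b)"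

definition blocks_ordered :: "nat set list \<Rightarrow> bool" where
  "blocks_ordered L \<longleftrightarrow> sorted_wrt (\<lambda>S T. \<forall>x\<in>S. \<forall>y\<in>T. x < y) L"

lemma uniform_block_Min: "uniform_block X s B b \<Longrightarrow> s > 0 \<Longrightarrow> X ! Min B = b"
  unfolding uniform_block_def by (metis Min_in card_gt_0_iff)

lemma uniform_block_Un:
  "uniform_block X s S b \<Longrightarrow> uniform_block X s T b \<Longrightarrow> S \<inter> T = {} \<Longrightarrow> s > 0
   \<Longrightarrow> uniform_block X (2 * s) (S \<union> T) b"
  unfolding uniform_block_def by (metis card_Un_disjoint card_ge_0_finite Un_iff mult_2)

lemma blocks_ordered_merge:
  "blocks_ordered (Ms @ S # T # L) \<Longrightarrow> blocks_ordered ((Ms @ [S \<union> T]) @ L)"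
  and blocks_ordered_drop:
  "blocks_ordered (Ms @ S # T # L) \<Longrightarrow> blocks_ordered (Ms @ L)"
  unfolding blocks_ordered_def sorted_wrt_append by auto

lemma op_step_Cons_skip: "card S \<noteq> s \<Longrightarrow> op_step X s (S # L) = map_option ((#) S) (op_step X s L)"
  by (cases L) auto

lemma op_step_append_skip:
  "\<forall>M\<in>set Ms. card M \<noteq> s \<Longrightarrow> op_step X s (Ms @ L) = map_option ((@) Ms) (op_step X s L)"
  by (cases "op_step X s L"; induction Ms) (auto simp: op_step_Cons_skip)

lemma op_step_append_pair:
  "\<forall>M\<in>set Ms. card M \<noteq> s \<Longrightarrow> card S = s \<Longrightarrow> card T = s
   \<Longrightarrow> op_step X s (Ms @ S # T # L) = Some (Ms @ op_combine X S T @ L)"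
  by (simp add: op_step_append_skip)

lemma op_step_small: "\<forall>B\<in>set L. card B < s \<Longrightarrow> op_step X s L = None"
  by (induction L) (auto simp: op_step_Cons_skip)

lemma op_step_single_small:
  "card B = s \<Longrightarrow> \<forall>B\<in>set L. card B < s \<Longrightarrow> op_step X s (B # L) = None"
  by (cases L) (auto simp: op_step_small)

declare op_phase.simps [simp del]

lemma op_phase_None: "op_step X s L = None \<Longrightarrow> op_phase X s L = (L, 0)"
  by (subst op_phase.simps) simp

lemma op_phase_Some:
  "op_step X s L = Some L' \<Longrightarrow> op_phase X s L = (fst (op_phase X s L'), Suc (snd (op_phase X s L')))"
  by (subst op_phase.simps) (simp add: case_prod_beta)

text \<open>\<open>Ms\<close> are the blocks merged so far in the phase and \<open>Od\<close> is the unpaired leftover block, if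
  any.\<close>
lemma op_phase_uniform_blocks:
  assumes "s > 0" "\<forall>M\<in>set Ms. card M = 2 * s" "list_all2 (uniform_block X s) Bs Y"
    "\<forall>B\<in>set Ls. card B < s" "blocks_ordered (Ms @ Bs @ Ls)"
  shows "\<exists>Ms' Od. op_phase X s (Ms @ Bs @ Ls) = (Ms @ Ms' @ Od @ Ls, length Y div 2)
     \<and> list_all2 (uniform_block X (2 * s)) Ms' (pair_round Y) \<and> (\<forall>B\<in>set Od. card B = s)
     \<and> blocks_ordered (Ms @ Ms' @ Od @ Ls)"
  using assms
proof (induction Y arbitrary: Ms Bs rule: pair_round.induct)
  case (1 x y Y)
  then obtain S T Bs' where Bs: "Bs = S # T # Bs'" and S: "uniform_block X s S x"
    and T: "uniform_block X s T y" and Bs': "list_all2 (uniform_block X s) Bs' Y"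
    by (auto simp: list_all2_Cons2)
  have "\<forall>M\<in>set Ms. card M \<noteq> s" using "1.prems"(1,2) by auto
  moreover have "card S = s" "card T = s" using S T by (auto simp: uniform_block_def)
  ultimately have step: "op_step X s (Ms @ Bs @ Ls) = Some (Ms @ op_combine X S T @ Bs' @ Ls)"
    unfolding Bs by (simp add: op_step_append_pair)
  have vals: "X ! Min S = x" "X ! Min T = y"
    using uniform_block_Min[OF S \<open>s > 0\<close>] uniform_block_Min[OF T \<open>s > 0\<close>] by auto
  show ?case
  proof (cases "x = y")
    case True
    have "S \<inter> T = {}"
      using "1.prems"(5) unfolding Bs blocks_ordered_def by (fastforce simp: sorted_wrt_append)
    then have ST: "uniform_block X (2 * s) (S \<union> T) x"
      using uniform_block_Un S T True \<open>s > 0\<close> by blast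
    have "blocks_ordered ((Ms @ [S \<union> T]) @ Bs' @ Ls)"
      using blocks_ordered_merge "1.prems"(5) unfolding Bs by simp
    moreover have "\<forall>M\<in>set (Ms @ [S \<union> T]). card M = 2 * s"
      using "1.prems"(2) ST by (auto simp: uniform_block_def)
    ultimately obtain Ms' Od where IH:
      "op_phase X s ((Ms @ [S \<union> T]) @ Bs' @ Ls) = ((Ms @ [S \<union> T]) @ Ms' @ Od @ Ls, length Y div 2)"
      "list_all2 (uniform_block X (2 * s)) Ms' (pair_round Y)" "\<forall>B\<in>set Od. card B = s"
      "blocks_ordered ((Ms @ [S \<union> T]) @ Ms' @ Od @ Ls)"
      using "1.IH"(1)[OF True "1.prems"(1) _ Bs' "1.prems"(4)] by blast
    show ?thesis
      using IH ST True step vals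
      by (intro exI[of _ "(S \<union> T) # Ms'"] exI[of _ Od]) (simp add: op_phase_Some op_combine_def)
  next
    case False
    have "blocks_ordered (Ms @ Bs' @ Ls)"
      using blocks_ordered_drop "1.prems"(5) unfolding Bs by simp
    then obtain Ms' Od where IH: "op_phase X s (Ms @ Bs' @ Ls) = (Ms @ Ms' @ Od @ Ls, length Y div 2)"
      "list_all2 (uniform_block X (2 * s)) Ms' (pair_round Y)" "\<forall>B\<in>set Od. card B = s"
      "blocks_ordered (Ms @ Ms' @ Od @ Ls)"
      using "1.IH"(2)[OF False "1.prems"(1,2) Bs' "1.prems"(4)] by blast
    show ?thesis
      using IH False step vals
      by (intro exI[of _ Ms'] exI[of _ Od]) (simp add: op_phase_Some op_combine_def)
  qed
next
  case "2_1"
  then have "op_step X s (Ms @ Bs @ Ls) = None"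
    by (subst op_step_append_skip) (auto simp: op_step_small)
  then show ?case using "2_1" by (auto simp: op_phase_None)
next
  case ("2_2" x)
  then obtain B where B: "Bs = [B]" "card B = s" by (auto simp: list_all2_Cons2 uniform_block_def)
  then have "op_step X s (Ms @ Bs @ Ls) = None"
    using "2_2" by (subst op_step_append_skip) (auto simp: op_step_single_small)
  then show ?case using "2_2" B
    by (intro exI[of _ "[]"] exI[of _ "[B]"]) (auto simp: op_phase_None)
qed

abbreviation op_phase_acc :: "bool list \<Rightarrow> nat set list \<times> nat \<Rightarrow> nat \<Rightarrow> nat set list \<times> nat" where
  "op_phase_acc X \<equiv> \<lambda>(L, c) k. let (L', c') = op_phase X (2 ^ (k - 1)) L in (L', c + c')"

lemma op_phases_count:
  assumes "k0 \<ge> 1" "list_all2 (uniform_block X (2 ^ (k0 - 1))) Bs Y"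
    "\<forall>B\<in>set Ls. card B < 2 ^ (k0 - 1)" "blocks_ordered (Bs @ Ls)"
  shows "snd (foldl (op_phase_acc X) (Bs @ Ls, c) [k0..<k0 + j])
     = c + (\<Sum>i<j. length ((pair_round ^^ i) Y) div 2)"
  using assms
proof (induction j arbitrary: k0 Bs Y Ls c)
  case 0
  then show ?case by simp
next
  case (Suc j)
  obtain Ms' Od where phase: "op_phase X (2 ^ (k0 - 1)) (Bs @ Ls) = (Ms' @ Od @ Ls, length Y div 2)"
    and Ms': "list_all2 (uniform_block X (2 * 2 ^ (k0 - 1))) Ms' (pair_round Y)"
    and Od: "\<forall>B\<in>set Od. card B = 2 ^ (k0 - 1)" and ord: "blocks_ordered (Ms' @ Od @ Ls)"
    using op_phase_uniform_blocks[of "2 ^ (k0 - 1)" "[]" X Bs Y Ls] Suc.prems by auto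
  have double: "2 * 2 ^ (k0 - 1) = (2::nat) ^ (Suc k0 - 1)"
    using Suc.prems(1) by (cases k0) auto
  have "\<forall>B\<in>set (Od @ Ls). card B < 2 ^ (Suc k0 - 1)"
    using Od Suc.prems(3) double[symmetric] by auto
  then have IH: "snd (foldl (op_phase_acc X) (Ms' @ Od @ Ls, c + length Y div 2) [Suc k0..<Suc k0 + j])
     = (c + length Y div 2) + (\<Sum>i<j. length ((pair_round ^^ i) (pair_round Y)) div 2)"
    using Suc.IH[of "Suc k0" Ms' "pair_round Y" "Od @ Ls"] Ms' double ord by simp
  have "(\<Sum>i<Suc j. length ((pair_round ^^ i) Y) div 2)
      = length Y div 2 + (\<Sum>i<j. length ((pair_round ^^ i) (pair_round Y)) div 2)"
    by (subst sum.lessThan_Suc_shift) (simp add: funpow_Suc_right del: funpow.simps)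
  moreover have "[k0..<k0 + Suc j] = k0 # [Suc k0..<Suc k0 + j]" by (simp add: upt_rec)
  ultimately show ?case using phase IH by simp
qed

lemma C_OP_eq_sum_pair_rounds:
  "C_OP X = (\<Sum>k<nat \<lfloor>log 2 (real (length X))\<rfloor>. length ((pair_round ^^ k) X) div 2)"
proof -
  have "list_all2 (uniform_block X (2 ^ (1 - 1))) (map (\<lambda>i. {i}) [0..<length X]) X"
    by (auto simp: list_all2_conv_all_nth uniform_block_def)
  moreover have "blocks_ordered (map (\<lambda>i. {i}) [0..<length X] @ [])"
    unfolding blocks_ordered_def by (auto simp: sorted_wrt_map sorted_wrt_iff_nth_less)
  ultimately show ?thesis
    unfolding C_OP_def op_run_def
    using op_phases_count[of 1 X _ X "[]" 0] by (simp add: add.commute)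
qed

section \<open>Counting cancellations\<close>

fun mismatches :: "bool list \<Rightarrow> nat" where
  "mismatches (x # y # Y) = (if x = y then mismatches Y else Suc (mismatches Y))"
| "mismatches _ = 0"

definition minority :: "bool list \<Rightarrow> nat" where
  "minority Y = min (count_list Y True) (count_list Y False)"

lemma count_list_True_False: "count_list Y True + count_list Y False = length Y"
  by (induction Y) auto

lemma length_pair_round: "length (pair_round Y) + mismatches Y = length Y div 2"
  by (induction Y rule: pair_round.induct) auto

lemma count_list_pair_round:
  "2 * count_list (pair_round Y) b + mismatches Y \<le> count_list Y b"
  "count_list Y b \<le> 2 * count_list (pair_round Y) b + mismatches Y + 1"
  by (induction Y rule: pair_round.induct) auto

lemma count_list_pair_round_even:
  "even (length Y) \<Longrightarrow> count_list Y b = 2 * count_list (pair_round Y) b + mismatches Y"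
  by (induction Y rule: pair_round.induct) auto

lemma minority_pair_round: "minority Y \<le> 2 * minority (pair_round Y) + mismatches Y + 1"
  using count_list_pair_round(2)[of Y True] count_list_pair_round(2)[of Y False]
    count_list_pair_round(1)[of Y True] count_list_pair_round(1)[of Y False]
  unfolding minority_def by linarith

lemma minority_le_count_True: "minority Y \<le> count_list Y True"
  unfolding minority_def by simp

lemma minority_short: "length Y \<le> 1 \<Longrightarrow> minority Y = 0"
  using count_list_True_False[of Y] unfolding minority_def by linarith

lemma funpow_pair_round_Suc: "(pair_round ^^ Suc k) Y = (pair_round ^^ k) (pair_round Y)"
  by (simp add: funpow_Suc_right del: funpow.simps)

lemma length_funpow_pair_round: "real (length ((pair_round ^^ k) Y)) \<le> real (length Y) / 2 ^ k"
proof (induction k)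
  case (Suc k)
  have "real (length (pair_round Z)) \<le> real (length Z) / 2" for Z
    using length_pair_round[of Z] by linarith
  then have "real (length ((pair_round ^^ Suc k) Y)) \<le> real (length ((pair_round ^^ k) Y)) / 2"
    by simp
  also have "\<dots> \<le> real (length Y) / 2 ^ k / 2"
    using Suc.IH by (simp add: divide_right_mono)
  finally show ?case by simp
qed simp

lemma sum_funpow_pair_round_Suc:
  "(\<Sum>k<Suc K. f ((pair_round ^^ k) Y)) = f Y + (\<Sum>k<K. f ((pair_round ^^ k) (pair_round Y)))"
  by (subst sum.lessThan_Suc_shift) (simp add: funpow_pair_round_Suc del: funpow.simps)

lemma sum_half_lengths_pair_rounds:
  "(\<Sum>k<K. length ((pair_round ^^ k) Y) div 2) + (\<Sum>k<K. mismatches ((pair_round ^^ k) Y))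
     + length ((pair_round ^^ K) Y) \<le> length Y"
proof (induction K arbitrary: Y)
  case (Suc K)
  have "length ((pair_round ^^ Suc K) Y) = length ((pair_round ^^ K) (pair_round Y))"
    by (simp only: funpow_pair_round_Suc)
  then show ?case
    using Suc.IH[of "pair_round Y"] length_pair_round[of Y]
      sum_funpow_pair_round_Suc[of "\<lambda>Z. length Z div 2" Y K]
      sum_funpow_pair_round_Suc[of mismatches Y K]
    by linarith
qed simp

text \<open>Telescoping \<open>minority_pair_round\<close> against the hypothesis is where the factor 2/3 comes from.\<close>
lemma sum_mismatches_pair_rounds:
  assumes "\<forall>k<K. real (mismatches ((pair_round ^^ k) Y))
                  \<ge> real (minority ((pair_round ^^ k) Y)) / 2 - \<delta> ((pair_round ^^ k) Y)"
  shows "real (\<Sum>k<K. mismatches ((pair_round ^^ k) Y))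
    \<ge> 2/3 * real (minority Y) - (\<Sum>k<K. (2 * \<delta> ((pair_round ^^ k) Y) + 1) / 3)
      - 2/3 * real (minority ((pair_round ^^ K) Y))"
  using assms
proof (induction K arbitrary: Y)
  case (Suc K)
  have "\<forall>k<K. real (mismatches ((pair_round ^^ k) (pair_round Y)))
      \<ge> real (minority ((pair_round ^^ k) (pair_round Y))) / 2 - \<delta> ((pair_round ^^ k) (pair_round Y))"
    using Suc.prems by (auto simp flip: funpow_pair_round_Suc)
  note IH = Suc.IH[OF this]
  have "real (mismatches Y) \<ge> real (minority Y) / 2 - \<delta> Y"
    using Suc.prems[rule_format, of 0] by simp
  moreover have "real (minority Y) \<le> 2 * real (minority (pair_round Y)) + real (mismatches Y) + 1"
    using minority_pair_round[of Y] by linarith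
  ultimately show ?case
    using IH sum_funpow_pair_round_Suc[of "\<lambda>Z. real (mismatches Z)" Y K]
      sum_funpow_pair_round_Suc[of "\<lambda>Z. (2 * \<delta> Z + 1) / 3" Y K]
    unfolding funpow_pair_round_Suc of_nat_sum by argo
qed simp

lemma floor_log2_bounds:
  assumes "N > 0"
  shows "2 ^ nat \<lfloor>log 2 (real N)\<rfloor> \<le> N" "N < 2 * 2 ^ nat \<lfloor>log 2 (real N)\<rfloor>"
proof -
  have "\<lfloor>log 2 (real N)\<rfloor> = int (nat \<lfloor>log 2 (real N)\<rfloor>)"
    using assms by simp
  then show "2 ^ nat \<lfloor>log 2 (real N)\<rfloor> \<le> N" "N < 2 * 2 ^ nat \<lfloor>log 2 (real N)\<rfloor>"
    using floor_log_nat_eq_powr_iff[of 2 N "nat \<lfloor>log 2 (real N)\<rfloor>"] assms by simp_all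
qed

lemma length_pair_rounds_floor_log:
  assumes "length X > 0"
  shows "length ((pair_round ^^ nat \<lfloor>log 2 (real (length X))\<rfloor>) X) \<le> 1"
proof -
  define K where "K = nat \<lfloor>log 2 (real (length X))\<rfloor>"
  have "real (length ((pair_round ^^ K) X)) * 2 ^ K \<le> real (length X)"
    using length_funpow_pair_round[of K X] by (simp add: field_simps)
  also have "\<dots> < real (2 * 2 ^ K)"
    using floor_log2_bounds(2)[OF assms] unfolding K_def by (simp only: of_nat_less_iff)
  finally show ?thesis unfolding K_def by simp
qed

lemma square_le_exp2: "(K + 2) ^ 2 \<le> 16 * (2::nat) ^ K"
proof (induction K)
  case (Suc K)
  show ?case
  proof (cases "K = 0")
    case False
    then have "(Suc K + 2) ^ 2 \<le> 2 * (K + 2) ^ 2" by (simp add: power2_eq_square algebra_simps)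
    also have "\<dots> \<le> 2 * (16 * 2 ^ K)" using Suc by simp
    finally show ?thesis by simp
  qed (simp add: power2_eq_square)
qed (simp add: power2_eq_square)

lemma floor_log2_le_sqrt: "N > 0 \<Longrightarrow> real (nat \<lfloor>log 2 (real N)\<rfloor>) + 2 \<le> 4 * sqrt (real N)"
proof -
  assume "N > 0"
  define K where "K = nat \<lfloor>log 2 (real N)\<rfloor>"
  have "(K + 2) ^ 2 \<le> 16 * N"
    using square_le_exp2[of K] floor_log2_bounds(1)[OF \<open>N > 0\<close>] unfolding K_def by linarith
  then have "real ((K + 2) ^ 2) \<le> real (16 * N)"
    by (simp only: of_nat_le_iff)
  then have "(real K + 2) ^ 2 \<le> 16 * real N" by (simp add: add.commute)
  then have "real K + 2 \<le> sqrt (16 * real N)" by (rule real_le_rsqrt)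
  then show ?thesis unfolding K_def by (simp add: real_sqrt_mult)
qed

lemma sum_sqrt_half_powers_le: "(\<Sum>k<K. sqrt (1/2) ^ k) \<le> (7/2::real)"
proof -
  define q :: real where "q = sqrt (1/2)"
  have "sqrt (1/2) \<le> sqrt ((5/7)^2)"
    by (subst real_sqrt_le_iff) (simp add: power2_eq_square)
  then have "q \<le> 5/7" unfolding q_def by simp
  moreover have "0 \<le> q" unfolding q_def by simp
  ultimately have "(\<Sum>k<K. q ^ k) \<le> 1 / (1 - q)"
    by (subst sum_gp_strict) (auto intro: divide_right_mono)
  also have "\<dots> \<le> 7/2" using \<open>q \<le> 5/7\<close> by (simp add: field_simps)
  finally show ?thesis unfolding q_def .
qed

lemma sum_sqrt_length_pair_rounds:
  fixes r :: real
  assumes "r \<ge> 0"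
  shows "(\<Sum>k<K. sqrt (r * real (length ((pair_round ^^ k) Y)))) \<le> 7/2 * sqrt (r * real (length Y))"
proof -
  have "sqrt (r * real (length ((pair_round ^^ k) Y))) \<le> sqrt (r * real (length Y)) * sqrt (1/2) ^ k" for k
  proof -
    have "sqrt (r * real (length ((pair_round ^^ k) Y))) \<le> sqrt (r * (real (length Y) / 2 ^ k))"
      using length_funpow_pair_round[of k Y] assms by (intro real_sqrt_le_mono mult_left_mono)
    also have "\<dots> = sqrt (r * real (length Y)) * sqrt (1/2) ^ k"
      by (simp add: real_sqrt_mult real_sqrt_divide real_sqrt_power power_divide)
    finally show ?thesis .
  qed
  then have "(\<Sum>k<K. sqrt (r * real (length ((pair_round ^^ k) Y))))
      \<le> sqrt (r * real (length Y)) * (\<Sum>k<K. sqrt (1/2) ^ k)"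
    by (simp add: sum_distrib_left sum_mono)
  also have "\<dots> \<le> sqrt (r * real (length Y)) * (7/2)"
    using sum_sqrt_half_powers_le assms by (intro mult_left_mono) auto
  finally show ?thesis by simp
qed

definition deficient :: "real \<Rightarrow> bool list \<Rightarrow> bool" where
  "deficient r Y \<longleftrightarrow> real (mismatches Y) < real (minority Y) / 2 - 30 * sqrt (r * real (length Y))"

lemma C_OP_bound_if_never_deficient:
  assumes r: "r \<ge> 1" and "length X > 0"
    and never_deficient: "\<forall>k < nat \<lfloor>log 2 (real (length X))\<rfloor>. \<not> deficient r ((pair_round ^^ k) X)"
  shows "real (C_OP X) < real (length X) - 2/3 * real (minority X) + 72 * sqrt (r * real (length X))"
proof -
  define N where "N = length X"
  define K where "K = nat \<lfloor>log 2 (real N)\<rfloor>"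
  define Y where "Y k = (pair_round ^^ k) X" for k
  define \<delta> :: "bool list \<Rightarrow> real" where "\<delta> Z = 30 * sqrt (r * real (length Z))" for Z
  have C_OP_le: "real (C_OP X) \<le> real N - real (\<Sum>k<K. mismatches (Y k))"
    using C_OP_eq_sum_pair_rounds[of X] sum_half_lengths_pair_rounds[where K = K and Y = X]
    unfolding Y_def K_def N_def by linarith
  have "length (Y K) \<le> 1"
    using length_pair_rounds_floor_log[OF \<open>length X > 0\<close>] unfolding Y_def K_def N_def .
  moreover have "\<forall>k<K. real (mismatches (Y k)) \<ge> real (minority (Y k)) / 2 - \<delta> (Y k)"
    using never_deficient unfolding deficient_def \<delta>_def Y_def K_def N_def by (auto simp: not_less)
  ultimately have mismatches_ge:
    "real (\<Sum>k<K. mismatches (Y k)) \<ge> 2/3 * real (minority X) - (\<Sum>k<K. (2 * \<delta> (Y k) + 1) / 3)"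
    using sum_mismatches_pair_rounds[where K = K and Y = X and \<delta> = \<delta>] minority_short[of "Y K"]
    unfolding Y_def by simp
  have "(\<Sum>k<K. (2 * \<delta> (Y k) + 1) / 3) = 2/3 * (\<Sum>k<K. \<delta> (Y k)) + real K / 3"
    by (simp add: sum.distrib sum_divide_distrib[symmetric] sum_distrib_left)
  moreover have "(\<Sum>k<K. \<delta> (Y k)) \<le> 105 * sqrt (r * real N)"
  proof -
    have "(\<Sum>k<K. \<delta> (Y k)) = 30 * (\<Sum>k<K. sqrt (r * real (length ((pair_round ^^ k) X))))"
      unfolding \<delta>_def Y_def by (simp add: sum_distrib_left)
    then show ?thesis
      using sum_sqrt_length_pair_rounds[where K = K and Y = X and r = r] r unfolding N_def by simp
  qed
  moreover have "real K \<le> 4 * sqrt (r * real N)"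
  proof -
    have "sqrt (real N) \<le> sqrt (r * real N)"
      using mult_right_mono[OF r, of "real N"] by (intro real_sqrt_le_mono) simp
    then show ?thesis
      using floor_log2_le_sqrt[of N, folded K_def] \<open>length X > 0\<close> unfolding N_def by linarith
  qed
  moreover have "sqrt (r * real N) > 0" using r \<open>length X > 0\<close> unfolding N_def by simp
  ultimately show ?thesis using C_OP_le mismatches_ge unfolding N_def by linarith
qed

section \<open>A pairing round of a uniformly random string\<close>

lemma finite_length_bool_lists: "finite {Y::bool list. length Y = n \<and> Q Y}"
  using finite_lists_length_eq[of "UNIV :: bool set" n] by (rule finite_subset[rotated]) auto

lemma card_length_0_bool_lists: "card {Y::bool list. length Y = 0 \<and> Q Y} = (if Q [] then 1 else 0)"
  by (cases "Q []") (auto simp: Collect_conv_if)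

lemma card_Un_disjoint_images:
  assumes "finite A" "finite B" "inj f" "inj g" "\<And>x y. f x \<noteq> g y"
  shows "card (f ` A \<union> g ` B) = card A + card B"
proof -
  have "card (f ` A \<union> g ` B) = card (f ` A) + card (g ` B)"
    by (rule card_Un_disjoint) (use assms in auto)
  also have "\<dots> = card A + card B"
    using assms by (simp add: card_image inj_on_subset)
  finally show ?thesis .
qed

lemma card_length_Suc_bool_lists_Cons:
  "card {Y::bool list. length Y = Suc m \<and> Q Y}
   = card {Y. length Y = m \<and> Q (True # Y)} + card {Y. length Y = m \<and> Q (False # Y)}"
proof -
  have "{Y::bool list. length Y = Suc m \<and> Q Y}
      = Cons True ` {Y. length Y = m \<and> Q (True # Y)} \<union> Cons False ` {Y. length Y = m \<and> Q (False # Y)}"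
    (is "?L = ?R")
  proof
    show "?L \<subseteq> ?R"
    proof
      fix Y assume "Y \<in> ?L"
      then obtain x Y' where "Y = x # Y'" "length Y' = m" "Q (x # Y')" by (auto simp: length_Suc_conv)
      then show "Y \<in> ?R" by (cases x) auto
    qed
  qed auto
  then show ?thesis
    by (simp add: card_Un_disjoint_images finite_length_bool_lists)
qed

lemma card_length_Suc_bool_lists_snoc:
  "card {Y::bool list. length Y = Suc m \<and> Q Y}
   = card {Y. length Y = m \<and> Q (Y @ [True])} + card {Y. length Y = m \<and> Q (Y @ [False])}"
proof -
  have "{Y::bool list. length Y = Suc m \<and> Q Y}
      = (\<lambda>Y. Y @ [True]) ` {Y. length Y = m \<and> Q (Y @ [True])}
        \<union> (\<lambda>Y. Y @ [False]) ` {Y. length Y = m \<and> Q (Y @ [False])}"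
    (is "?L = ?R")
  proof
    show "?L \<subseteq> ?R"
    proof
      fix Y assume "Y \<in> ?L"
      then obtain x Y' where "Y = Y' @ [x]" "length Y' = m" "Q (Y' @ [x])"
        by (auto simp: length_Suc_conv_rev)
      then show "Y \<in> ?R" by (cases x) auto
    qed
  qed auto
  then show ?thesis
    by (simp add: card_Un_disjoint_images finite_length_bool_lists inj_def)
qed

definition pair_round_preimages :: "nat \<Rightarrow> nat \<Rightarrow> bool list \<Rightarrow> bool list set" where
  "pair_round_preimages n a Z = {Y. length Y = n \<and> count_list Y True = a \<and> pair_round Y = Z}"

text \<open>A preimage of \<open>Z\<close> with \<open>p\<close> pairs and \<open>e\<close> unpaired trailing bits is fixed by choosing
  which \<open>length Z\<close> pairs are equal (their values are then read off \<open>Z\<close>), orienting the other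
  \<open>p - length Z\<close> pairs, each of which carries a single one, and the unpaired bit.\<close>
definition preimage_count :: "nat \<Rightarrow> nat \<Rightarrow> nat \<Rightarrow> nat \<Rightarrow> nat \<Rightarrow> nat" where
  "preimage_count p e a l q = (if l \<le> p \<and> 2 * q + p \<le> a + l \<and> a + l \<le> 2 * q + p + e
     then (p choose l) * 2 ^ (p - l) else 0)"

lemma card_pair_round_preimages_Suc_Suc:
  "card (pair_round_preimages (Suc (Suc m)) a Z)
   = (if 2 \<le> a \<and> Z \<noteq> [] \<and> hd Z then card (pair_round_preimages m (a - 2) (tl Z)) else 0)
     + 2 * (if 1 \<le> a then card (pair_round_preimages m (a - 1) Z) else 0)
     + (if Z \<noteq> [] \<and> \<not> hd Z then card (pair_round_preimages m a (tl Z)) else 0)"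
proof -
  have "card (pair_round_preimages (Suc (Suc m)) a Z)
     = card {Y. length Y = m \<and> Suc (Suc (count_list Y True)) = a \<and> True # pair_round Y = Z}
       + 2 * card {Y. length Y = m \<and> Suc (count_list Y True) = a \<and> pair_round Y = Z}
       + card {Y. length Y = m \<and> count_list Y True = a \<and> False # pair_round Y = Z}"
    unfolding pair_round_preimages_def by (simp add: card_length_Suc_bool_lists_Cons)
  moreover have "card {Y. length Y = m \<and> Suc (Suc (count_list Y True)) = a \<and> True # pair_round Y = Z}
      = (if 2 \<le> a \<and> Z \<noteq> [] \<and> hd Z then card (pair_round_preimages m (a - 2) (tl Z)) else 0)"
    unfolding pair_round_preimages_def
    by (cases Z; cases a; cases "a - 1") (auto simp: Suc_diff_Suc numeral_2_eq_2)
  moreover have "card {Y. length Y = m \<and> Suc (count_list Y True) = a \<and> pair_round Y = Z}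
      = (if 1 \<le> a then card (pair_round_preimages m (a - 1) Z) else 0)"
    unfolding pair_round_preimages_def by (cases a) auto
  moreover have "card {Y. length Y = m \<and> count_list Y True = a \<and> False # pair_round Y = Z}
      = (if Z \<noteq> [] \<and> \<not> hd Z then card (pair_round_preimages m a (tl Z)) else 0)"
    unfolding pair_round_preimages_def by (cases Z) auto
  ultimately show ?thesis by simp
qed

lemma weighted_pascal:
  "(Suc p choose Suc l) * 2 ^ (p - l)
   = (p choose l) * 2 ^ (p - l) + (if l < p then 2 * ((p choose Suc l) * 2 ^ (p - Suc l)) else 0)"
proof (cases "l < p")
  case True
  then have "(2::nat) ^ (p - l) = 2 * 2 ^ (p - Suc l)" by (metis Suc_diff_Suc power_Suc)
  then show ?thesis using True by (simp add: algebra_simps)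
qed simp

lemma preimage_count_Suc_Nil:
  "preimage_count (Suc p) e a 0 0 = (if a \<ge> 1 then 2 * preimage_count p e (a - 1) 0 0 else 0)"
  unfolding preimage_count_def by auto

lemma preimage_count_Suc_True:
  "preimage_count (Suc p) e a (Suc l) (Suc q)
   = (if a \<ge> 2 then preimage_count p e (a - 2) l q else 0)
     + (if a \<ge> 1 then 2 * preimage_count p e (a - 1) (Suc l) (Suc q) else 0)"
  unfolding preimage_count_def by (auto simp: weighted_pascal simp del: binomial_Suc_Suc)

lemma preimage_count_Suc_False:
  "preimage_count (Suc p) e a (Suc l) q
   = preimage_count p e a l q + (if a \<ge> 1 then 2 * preimage_count p e (a - 1) (Suc l) q else 0)"
  unfolding preimage_count_def by (auto simp: weighted_pascal simp del: binomial_Suc_Suc)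

lemma card_pair_round_preimages:
  "card (pair_round_preimages n a Z) = preimage_count (n div 2) (n mod 2) a (length Z) (count_list Z True)"
proof (induction n arbitrary: a Z rule: induct_nat_012)
  case 0
  show ?case
    unfolding pair_round_preimages_def card_length_0_bool_lists by (cases Z) (auto simp: preimage_count_def)
next
  case 1
  show ?case
    unfolding pair_round_preimages_def card_length_Suc_bool_lists_Cons card_length_0_bool_lists
    by (cases Z) (auto simp: preimage_count_def)
next
  case (ge2 m)
  have div_mod: "Suc (Suc m) div 2 = Suc (m div 2)" "Suc (Suc m) mod 2 = m mod 2" by auto
  show ?case
  proof (cases Z)
    case Nil
    then show ?thesis
      unfolding card_pair_round_preimages_Suc_Suc div_mod ge2.IH(1) by (simp add: preimage_count_Suc_Nil)
  next
    case (Cons z Z')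
    show ?thesis
    proof (cases z)
      case True
      then show ?thesis
        unfolding Cons card_pair_round_preimages_Suc_Suc div_mod ge2.IH(1) by (simp add: preimage_count_Suc_True)
    next
      case False
      then show ?thesis
        unfolding Cons card_pair_round_preimages_Suc_Suc div_mod ge2.IH(1) by (simp add: preimage_count_Suc_False)
    qed
  qed
qed

lemma finite_length_le_bool_lists: "finite {Z::bool list. length Z \<le> n \<and> Q Z}"
  using finite_lists_length_le[of "UNIV :: bool set" n] by (rule finite_subset[rotated]) auto

lemma finite_strings_with_ones: "finite {Y \<in> strings_with_ones n a. Q Y}"
  unfolding strings_with_ones_def using finite_length_bool_lists[of n "\<lambda>Y. count_list Y True = a \<and> Q Y"]
  by (simp add: conj_assoc)

text \<open>The preimage count depends on \<open>Z\<close> only through its length and number of ones, so the image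
  under \<open>pair_round\<close> of the uniform distribution on \<open>strings_with_ones n a\<close> is a mixture of
  uniform distributions on the sets \<open>strings_with_ones l q\<close>.\<close>
lemma card_pair_round_event:
  "card {Y \<in> strings_with_ones n a. P (pair_round Y)}
   = (\<Sum>(l, q)\<in>{..n} \<times> {..n}. preimage_count (n div 2) (n mod 2) a l q * card {Z \<in> strings_with_ones l q. P Z})"
proof -
  define W where "W = {Z::bool list. length Z \<le> n \<and> P Z}"
  define c where "c l q = preimage_count (n div 2) (n mod 2) a l q" for l q
  define f where "f Z = (length Z, count_list Z True)" for Z :: "bool list"
  have "length (pair_round Y) \<le> length Y" for Y
    using length_pair_round[of Y] by linarith
  then have "{Y \<in> strings_with_ones n a. P (pair_round Y)} = (\<Union>Z\<in>W. pair_round_preimages n a Z)"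
    unfolding W_def pair_round_preimages_def strings_with_ones_def by auto
  moreover have "finite (pair_round_preimages n a Z)" for Z
    unfolding pair_round_preimages_def using finite_length_bool_lists by (simp add: conj_assoc)
  moreover have "pair_round_preimages n a Z \<inter> pair_round_preimages n a Z' = {}" if "Z \<noteq> Z'" for Z Z'
    using that unfolding pair_round_preimages_def by auto
  moreover have "finite W" unfolding W_def by (rule finite_length_le_bool_lists)
  ultimately have "card {Y \<in> strings_with_ones n a. P (pair_round Y)} = (\<Sum>Z\<in>W. c (length Z) (count_list Z True))"
    by (simp add: card_UN_disjoint card_pair_round_preimages c_def)
  also have "\<dots> = (\<Sum>(l, q)\<in>{..n} \<times> {..n}. \<Sum>Z\<in>{Z\<in>W. f Z = (l, q)}. c (length Z) (count_list Z True))"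
  proof -
    have "f ` W \<subseteq> {..n} \<times> {..n}"
      unfolding f_def W_def by (auto intro: le_trans[OF count_le_length])
    then show ?thesis
      using sum.group[of W "{..n} \<times> {..n}" f "\<lambda>Z. c (length Z) (count_list Z True)"] \<open>finite W\<close>
      by (simp add: case_prod_beta)
  qed
  also have "\<dots> = (\<Sum>(l, q)\<in>{..n} \<times> {..n}. c l q * card {Z \<in> strings_with_ones l q. P Z})"
  proof -
    have "(\<Sum>Z\<in>{Z\<in>W. f Z = (l, q)}. c (length Z) (count_list Z True))
        = c l q * card {Z \<in> strings_with_ones l q. P Z}" if "l \<le> n" for l q
    proof -
      have "{Z\<in>W. f Z = (l, q)} = {Z \<in> strings_with_ones l q. P Z}"
        using that unfolding W_def f_def strings_with_ones_def by auto
      moreover have "(\<Sum>Z\<in>{Z\<in>W. f Z = (l, q)}. c (length Z) (count_list Z True))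
          = (\<Sum>Z\<in>{Z\<in>W. f Z = (l, q)}. c l q)"
        by (rule sum.cong) (auto simp: f_def)
      ultimately show ?thesis by simp
    qed
    then show ?thesis by (intro sum.cong) auto
  qed
  finally show ?thesis unfolding c_def .
qed

lemma pair_round_preserves_density_bound:
  assumes "\<And>l q. real (card {Z \<in> strings_with_ones l q. P Z}) \<le> \<epsilon> * real (card (strings_with_ones l q))"
  shows "real (card {Y \<in> strings_with_ones n a. P (pair_round Y)}) \<le> \<epsilon> * real (card (strings_with_ones n a))"
proof -
  define c where "c l q = real (preimage_count (n div 2) (n mod 2) a l q)" for l q
  have "real (card {Y \<in> strings_with_ones n a. P (pair_round Y)})
      = (\<Sum>(l, q)\<in>{..n} \<times> {..n}. c l q * real (card {Z \<in> strings_with_ones l q. P Z}))"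
    unfolding card_pair_round_event c_def by (simp add: of_nat_sum case_prod_beta)
  also have "\<dots> \<le> (\<Sum>(l, q)\<in>{..n} \<times> {..n}. c l q * (\<epsilon> * real (card {Z \<in> strings_with_ones l q. True})))"
    unfolding c_def by (intro sum_mono) (auto intro: mult_left_mono assms)
  also have "\<dots> = \<epsilon> * real (card {Y \<in> strings_with_ones n a. True})"
    unfolding card_pair_round_event[of n a "\<lambda>_. True"] c_def
    by (simp add: of_nat_sum case_prod_beta sum_distrib_left algebra_simps)
  finally show ?thesis by simp
qed

section \<open>Tail bound for the mismatches of one round\<close>

text \<open>The number of strings of \<open>p\<close> pairs of which \<open>q\<close> are \<open>11\<close>, \<open>R\<close> are mismatched and the rest
  are \<open>00\<close>.\<close>
definition pair_type_count :: "nat \<Rightarrow> nat \<Rightarrow> nat \<Rightarrow> nat" where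
  "pair_type_count p q R = (p choose q) * ((p - q) choose R) * 2 ^ R"

lemma pair_type_count_Suc:
  "pair_type_count (Suc p) q R = (if q \<ge> 1 then pair_type_count p (q - 1) R else 0)
     + pair_type_count p q R + (if R \<ge> 1 then 2 * pair_type_count p q (R - 1) else 0)"
proof (cases "q \<le> p")
  case True
  then have "Suc p - q = Suc (p - q)" by simp
  with True show ?thesis
    by (cases q; cases R) (simp_all add: pair_type_count_def Suc_diff_le algebra_simps)
next
  case False
  then show ?thesis
    by (cases q; cases R) (auto simp: pair_type_count_def)
qed

lemma pair_type_count_ratio:
  "4 * (q + 1) * (p - q - 1 - R) * pair_type_count p (q + 1) R
   = (R + 2) * (R + 1) * pair_type_count p q (R + 2)"
proof (cases "q < p")
  case True
  define m where "m = p - q - 1"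
  have m: "p - q = Suc m" using True unfolding m_def by simp
  have q_absorb: "(q + 1) * (p choose (q + 1)) = (p - q) * (p choose q)"
    using binomial_absorption[of q p] binomial_absorb_comp[of p q] by simp
  have R_absorb: "(R + 2) * (Suc m choose (R + 2)) = Suc m * (m choose (R + 1))"
    using binomial_absorption[of "R + 1" "Suc m"] by simp
  have m_absorb: "(R + 1) * (m choose (R + 1)) = m * ((m - 1) choose R)"
    using binomial_absorption[of R m] by simp
  have "4 * (q + 1) * (p - q - 1 - R) * pair_type_count p (q + 1) R
      = 4 * ((q + 1) * (p choose (q + 1))) * ((m - R) * (m choose R)) * 2 ^ R"
    unfolding pair_type_count_def m_def diff_diff_left by (simp only: mult_ac)
  also have "\<dots> = 4 * ((p - q) * (p choose q)) * (m * ((m - 1) choose R)) * 2 ^ R"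
    by (simp only: q_absorb binomial_absorb_comp)
  also have "\<dots> = (p choose q) * (Suc m * ((R + 1) * (m choose (R + 1)))) * 2 ^ (R + 2)"
    unfolding m m_absorb by (simp add: power_add algebra_simps)
  also have "\<dots> = (p choose q) * ((R + 1) * ((R + 2) * (Suc m choose (R + 2)))) * 2 ^ (R + 2)"
    unfolding R_absorb by (simp only: mult_ac)
  also have "\<dots> = (R + 2) * (R + 1) * pair_type_count p q (R + 2)"
    unfolding pair_type_count_def m by (simp add: algebra_simps)
  finally show ?thesis .
qed (simp add: pair_type_count_def)

lemma pair_type_count_Suc_le:
  assumes "2 * q + 2 + R \<le> p"
  shows "(2 * real q + 2)\<^sup>2 * real (pair_type_count p (q + 1) R)
    \<le> (real R + 2)\<^sup>2 * real (pair_type_count p q (R + 2))"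
proof -
  have "q + 1 \<le> p - q - 1 - R" using assms by simp
  then have "4 * (q + 1) * (q + 1) \<le> 4 * (q + 1) * (p - q - 1 - R)" by (rule mult_left_mono) simp
  moreover have "(2 * real q + 2)\<^sup>2 = real (4 * (q + 1) * (q + 1))"
    by (simp add: power2_eq_square algebra_simps)
  ultimately have "(2 * real q + 2)\<^sup>2 \<le> real (4 * (q + 1) * (p - q - 1 - R))"
    by (simp only: of_nat_le_iff)
  then have "(2 * real q + 2)\<^sup>2 * real (pair_type_count p (q + 1) R)
      \<le> real (4 * (q + 1) * (p - q - 1 - R) * pair_type_count p (q + 1) R)"
    by (simp add: mult_right_mono)
  also have "\<dots> = real ((R + 2) * (R + 1)) * real (pair_type_count p q (R + 2))"
    by (simp only: pair_type_count_ratio of_nat_mult)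
  also have "\<dots> \<le> (real R + 2)\<^sup>2 * real (pair_type_count p q (R + 2))"
    by (rule mult_right_mono) (auto simp: power2_eq_square algebra_simps)
  finally show ?thesis .
qed

definition round_ones_count :: "nat \<Rightarrow> nat \<Rightarrow> nat \<Rightarrow> nat" where
  "round_ones_count p a q = (if 2 * q \<le> a then pair_type_count p q (a - 2 * q) else 0)"

lemma card_round_ones:
  "card {Y \<in> strings_with_ones (2 * p) a. count_list (pair_round Y) True = q} = round_ones_count p a q"
proof (induction p arbitrary: a q)
  case 0
  have "{Y \<in> strings_with_ones (2 * 0) a. count_list (pair_round Y) True = q}
      = (if a = 0 \<and> q = 0 then {[]} else {})"
    unfolding strings_with_ones_def by auto
  then show ?case by (auto simp: round_ones_count_def pair_type_count_def)
next
  case (Suc p)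
  define C where "C a q = card {Y. length Y = 2 * p \<and> count_list Y True = a \<and> count_list (pair_round Y) True = q}"
    for a q
  have IH: "C a q = round_ones_count p a q" for a q
    using Suc.IH[of a q] unfolding C_def strings_with_ones_def by (simp add: conj_assoc)
  have "card {Y \<in> strings_with_ones (2 * Suc p) a. count_list (pair_round Y) True = q}
      = (if 2 \<le> a \<and> 1 \<le> q then C (a - 2) (q - 1) else 0) + 2 * (if 1 \<le> a then C (a - 1) q else 0) + C a q"
  proof -
    have "card {Y \<in> strings_with_ones (2 * Suc p) a. count_list (pair_round Y) True = q}
      = card {Y. length Y = 2 * p \<and> Suc (Suc (count_list Y True)) = a \<and> Suc (count_list (pair_round Y) True) = q}
        + 2 * card {Y. length Y = 2 * p \<and> Suc (count_list Y True) = a \<and> count_list (pair_round Y) True = q}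
        + C a q"
      unfolding strings_with_ones_def C_def by (simp add: card_length_Suc_bool_lists_Cons conj_assoc)
    then show ?thesis
      unfolding C_def by (cases a; cases "a - 1"; cases q) (auto simp: numeral_2_eq_2)
  qed
  also have "\<dots> = round_ones_count (Suc p) a q"
    unfolding IH round_ones_count_def pair_type_count_Suc[of p q "a - 2 * q"]
    by (cases q) (auto simp: Suc_diff_Suc numeral_2_eq_2)
  finally show ?case .
qed

lemma square_le_contraction:
  fixes a u x y :: real
  assumes "0 < a" "0 \<le> u" "4 * u \<le> a" "0 \<le> x" "x \<le> a / 2 - 2 * u" "a / 2 + 2 * u \<le> y"
  shows "x\<^sup>2 \<le> (1 - 4 * u / a) * y\<^sup>2"
proof -
  define \<rho> where "\<rho> = 1 - 4 * u / a"
  have "0 \<le> \<rho>" using assms unfolding \<rho>_def by (simp add: field_simps)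
  have "\<rho> * (a / 2 + 2 * u) = a / 2 - 8 * u\<^sup>2 / a"
    using assms(1) unfolding \<rho>_def by (simp add: field_simps power2_eq_square)
  moreover have "8 * u\<^sup>2 / a \<le> 2 * u"
    using assms(1-3) mult_left_mono[OF assms(3) assms(2)] by (simp add: field_simps power2_eq_square)
  ultimately have "x \<le> \<rho> * y"
    using assms(5,6) mult_left_mono[OF assms(6) \<open>0 \<le> \<rho>\<close>] by linarith
  moreover have "x \<le> y" using assms(2,5,6) by linarith
  ultimately show ?thesis
    using mult_mono[OF \<open>x \<le> \<rho> * y\<close> \<open>x \<le> y\<close>] \<open>0 \<le> \<rho>\<close> assms(4)
    unfolding \<rho>_def by (simp add: power2_eq_square mult_ac)
qed

lemma round_ones_count_Suc_le:
  fixes u :: real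
  assumes "a \<le> p" "0 < a" "0 \<le> u" "4 * u \<le> real a" "real a / 4 + u \<le> real q"
  shows "real (round_ones_count p a (q + 1)) \<le> (1 - 4 * u / real a) * real (round_ones_count p a q)"
proof -
  define \<rho> where "\<rho> = 1 - 4 * u / real a"
  have "0 \<le> \<rho>" using assms unfolding \<rho>_def by (simp add: field_simps)
  show ?thesis
  proof (cases "2 * (q + 1) \<le> a")
    case True
    define R where "R = a - 2 * (q + 1)"
    define x where "x = real R + 2"
    define y where "y = 2 * real q + 2"
    have a_eq: "real a = 2 * real q + 2 + real R" using True unfolding R_def by simp
    have x_le: "x \<le> real a / 2 - 2 * u" and y_ge: "y \<ge> real a / 2 + 2 * u"
      using assms(5) a_eq unfolding x_def y_def by linarith+
    have x_sq: "x\<^sup>2 \<le> \<rho> * y\<^sup>2"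
      using square_le_contraction[OF _ assms(3,4) _ x_le y_ge] assms(2) unfolding \<rho>_def x_def by simp
    have "y\<^sup>2 * real (pair_type_count p (q + 1) R) \<le> x\<^sup>2 * real (pair_type_count p q (R + 2))"
      using pair_type_count_Suc_le[of q R p] assms(1) True unfolding x_def y_def R_def by simp
    also have "\<dots> \<le> \<rho> * y\<^sup>2 * real (pair_type_count p q (R + 2))"
      using x_sq by (rule mult_right_mono) simp
    finally have "y\<^sup>2 * real (pair_type_count p (q + 1) R) \<le> y\<^sup>2 * (\<rho> * real (pair_type_count p q (R + 2)))"
      by (simp only: mult_ac)
    moreover have "y\<^sup>2 > 0" unfolding y_def by (simp add: add_pos_nonneg)
    ultimately have "real (pair_type_count p (q + 1) R) \<le> \<rho> * real (pair_type_count p q (R + 2))"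
      by simp
    moreover have "a - 2 * q = R + 2" using True unfolding R_def by simp
    ultimately show ?thesis unfolding round_ones_count_def \<rho>_def R_def using True by simp
  qed (use \<open>0 \<le> \<rho>\<close> in \<open>simp add: round_ones_count_def \<rho>_def\<close>)
qed

lemma sum_tail_geometric_decay:
  fixes f :: "nat \<Rightarrow> real"
  assumes decay: "\<And>q. q \<ge> q\<^sub>0 \<Longrightarrow> f (Suc q) \<le> \<rho> * f q" and "\<And>q. f q \<ge> 0" "\<rho> \<ge> 0"
  shows "(\<Sum>q = q\<^sub>0 + L..n. f q) \<le> \<rho> ^ L * (\<Sum>q = q\<^sub>0..n. f q)"
proof (induction L)
  case (Suc L)
  have "(\<Sum>q = q\<^sub>0 + Suc L..n. f q) \<le> (\<Sum>q = q\<^sub>0 + L..n. \<rho> * f q)"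
  proof (cases "q\<^sub>0 + L < n")
    case True
    then obtain n' where n': "n = Suc n'" by (cases n) auto
    have "(\<Sum>q = q\<^sub>0 + Suc L..n. f q) = (\<Sum>q = q\<^sub>0 + L..n'. f (Suc q))"
      unfolding n' add_Suc_right by (rule sum.shift_bounds_cl_Suc_ivl)
    also have "\<dots> \<le> (\<Sum>q = q\<^sub>0 + L..n'. \<rho> * f q)" by (intro sum_mono decay) auto
    also have "\<dots> \<le> (\<Sum>q = q\<^sub>0 + L..n. \<rho> * f q)"
      using assms(2,3) unfolding n' by (intro sum_mono2) auto
    finally show ?thesis .
  next
    case False
    then have "{q\<^sub>0 + Suc L..n} = {}" by auto
    then show ?thesis using assms(2,3) by (simp add: sum_nonneg)
  qed
  also have "\<dots> \<le> \<rho> * (\<rho> ^ L * (\<Sum>q = q\<^sub>0..n. f q))"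
    using Suc.IH \<open>\<rho> \<ge> 0\<close> by (simp add: sum_distrib_left[symmetric] mult_left_mono)
  finally show ?case by (simp add: mult.assoc)
qed simp

lemma card_round_ones_between:
  "card {Y \<in> strings_with_ones (2 * p) a. count_list (pair_round Y) True \<in> {q\<^sub>0..a}}
   = (\<Sum>q = q\<^sub>0..a. round_ones_count p a q)"
proof -
  let ?A = "{Y \<in> strings_with_ones (2 * p) a. count_list (pair_round Y) True \<in> {q\<^sub>0..a}}"
  have img: "(\<lambda>Y. count_list (pair_round Y) True) ` ?A \<subseteq> {q\<^sub>0..a}" by auto
  have "card ?A = (\<Sum>q = q\<^sub>0..a. card {Y \<in> ?A. count_list (pair_round Y) True = q})"
    using sum.group[OF finite_strings_with_ones finite_atLeastAtMost img, where h = "\<lambda>_. 1::nat"]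
    by simp
  also have "\<dots> = (\<Sum>q = q\<^sub>0..a. round_ones_count p a q)"
  proof (rule sum.cong[OF refl])
    fix q assume "q \<in> {q\<^sub>0..a}"
    then have "{Y \<in> ?A. count_list (pair_round Y) True = q}
        = {Y \<in> strings_with_ones (2 * p) a. count_list (pair_round Y) True = q}"
      by auto
    then show "card {Y \<in> ?A. count_list (pair_round Y) True = q} = round_ones_count p a q"
      by (simp only: card_round_ones)
  qed
  finally show ?thesis .
qed

lemma card_round_ones_ge:
  fixes u :: real
  assumes "a \<le> p" "0 < a" "0 \<le> u" "4 * u \<le> real a" "real a / 4 + u \<le> real q\<^sub>0"
  shows "real (card {Y \<in> strings_with_ones (2 * p) a. q\<^sub>0 + L \<le> count_list (pair_round Y) True})
    \<le> (1 - 4 * u / real a) ^ L * real (card (strings_with_ones (2 * p) a))"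
proof -
  let ?S = "strings_with_ones (2 * p) a"
  let ?T = "\<lambda>q. real (round_ones_count p a q)"
  have round_ones_le: "count_list (pair_round Y) True \<le> a" if "Y \<in> ?S" for Y
    using that count_list_pair_round(1)[of Y True] unfolding strings_with_ones_def by simp
  then have "{Y \<in> ?S. q\<^sub>0 + L \<le> count_list (pair_round Y) True}
      = {Y \<in> ?S. count_list (pair_round Y) True \<in> {q\<^sub>0 + L..a}}"
    by auto
  then have "real (card {Y \<in> ?S. q\<^sub>0 + L \<le> count_list (pair_round Y) True}) = (\<Sum>q = q\<^sub>0 + L..a. ?T q)"
    by (simp only: card_round_ones_between of_nat_sum)
  also have "\<dots> \<le> (1 - 4 * u / real a) ^ L * (\<Sum>q = q\<^sub>0..a. ?T q)"
  proof (rule sum_tail_geometric_decay)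
    show "?T (Suc q) \<le> (1 - 4 * u / real a) * ?T q" if "q\<^sub>0 \<le> q" for q
      using round_ones_count_Suc_le[of a p u q] assms that by simp
    show "0 \<le> 1 - 4 * u / real a" using assms(2,4) by (simp add: field_simps)
  qed simp
  also have "\<dots> \<le> (1 - 4 * u / real a) ^ L * (\<Sum>q = 0..a. ?T q)"
    using assms(2,4) by (intro mult_left_mono sum_mono2) (auto simp: field_simps)
  also have "(\<Sum>q = 0..a. ?T q) = real (card ?S)"
  proof -
    have "{Y \<in> ?S. count_list (pair_round Y) True \<in> {0..a}} = ?S" using round_ones_le by auto
    then show ?thesis using card_round_ones_between[of p a 0] by simp
  qed
  finally show ?thesis .
qed

lemma one_minus_power_le_exp:
  fixes x y :: real
  assumes "0 \<le> x" "x \<le> 1" "y \<le> real L"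
  shows "(1 - x) ^ L \<le> exp (- x * y)"
proof -
  have "(1 - x) ^ L \<le> exp (- x) ^ L"
    using assms(2) exp_ge_add_one_self[of "- x"] by (intro power_mono) auto
  also have "\<dots> = exp (- x * real L)"
    by (simp add: exp_of_nat_mult[symmetric] mult.commute)
  also have "\<dots> \<le> exp (- x * y)"
    using assms(1,3) by (simp add: mult_left_mono)
  finally show ?thesis .
qed

text \<open>Few mismatches mean many ones in the next round, since \<open>a = 2 * q + mismatches Y\<close>; the
  threshold \<open>q\<^sub>0\<close> and the exponent \<open>L\<close> are chosen for \<open>u = t / 4\<close>.\<close>
lemma card_few_mismatches_even:
  fixes t :: real
  assumes "a \<le> p" "t \<ge> 24"
  shows "real (card {Y \<in> strings_with_ones (2 * p) a. real (mismatches Y) < real a / 2 + 1 - t})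
     \<le> exp (- t\<^sup>2 / (8 * real a)) * real (card (strings_with_ones (2 * p) a))"
proof (cases "t \<ge> real a / 2 + 1")
  case False
  then have "t \<le> real a" "a > 0" using assms(2) by linarith+
  define q\<^sub>0 where "q\<^sub>0 = nat \<lceil>real a / 4 + t / 4\<rceil>"
  define L where "L = nat \<lfloor>t / 4 - 2\<rfloor>"
  have "t / 8 \<le> real L" using assms(2) unfolding L_def by linarith
  have "{Y \<in> strings_with_ones (2 * p) a. real (mismatches Y) < real a / 2 + 1 - t}
      \<subseteq> {Y \<in> strings_with_ones (2 * p) a. q\<^sub>0 + L \<le> count_list (pair_round Y) True}"
  proof clarify
    fix Y assume Y: "Y \<in> strings_with_ones (2 * p) a" "real (mismatches Y) < real a / 2 + 1 - t"
    then have "real a = 2 * real (count_list (pair_round Y) True) + real (mismatches Y)"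
      using count_list_pair_round_even[of Y True] unfolding strings_with_ones_def by simp
    then have "real (q\<^sub>0 + L) < real (count_list (pair_round Y) True)"
      using Y(2) assms(2) unfolding q\<^sub>0_def L_def by linarith
    then show "q\<^sub>0 + L \<le> count_list (pair_round Y) True" by simp
  qed
  then have "real (card {Y \<in> strings_with_ones (2 * p) a. real (mismatches Y) < real a / 2 + 1 - t})
      \<le> real (card {Y \<in> strings_with_ones (2 * p) a. q\<^sub>0 + L \<le> count_list (pair_round Y) True})"
    by (intro of_nat_mono card_mono finite_strings_with_ones)
  also have "\<dots> \<le> (1 - t / real a) ^ L * real (card (strings_with_ones (2 * p) a))"
    using card_round_ones_ge[of a p "t / 4" q\<^sub>0 L] assms \<open>t \<le> real a\<close> \<open>a > 0\<close>
    unfolding q\<^sub>0_def by simp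
  also have "\<dots> \<le> exp (- (t / real a) * (t / 8)) * real (card (strings_with_ones (2 * p) a))"
    using one_minus_power_le_exp[of "t / real a" "t / 8" L] \<open>t / 8 \<le> real L\<close> assms(2) \<open>t \<le> real a\<close>
    by (intro mult_right_mono) auto
  also have "exp (- (t / real a) * (t / 8)) = exp (- t\<^sup>2 / (8 * real a))"
    by (simp add: power2_eq_square)
  finally show ?thesis .
qed simp

lemma exp_neg_le_two_powr_neg:
  fixes r x :: real
  assumes "0 \<le> r" "r \<le> x"
  shows "exp (- x) \<le> 2 powr (- r)"
proof -
  have "r * ln 2 \<le> x"
    using assms ln_2_less_1 mult_left_mono[of "ln 2" 1 r] by linarith
  then have "exp (- x) \<le> exp (- r * ln 2)" by simp
  also have "\<dots> = 2 powr (- r)" by (simp add: powr_def)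
  finally show ?thesis .
qed

lemma card_few_mismatches_even_powr:
  fixes r t :: real
  assumes "a \<le> p" "1 \<le> p" "1 \<le> r" "30 * sqrt (r * (2 * real p)) \<le> t"
  shows "real (card {Y \<in> strings_with_ones (2 * p) a. real (mismatches Y) < real a / 2 + 1 - t})
     \<le> 2 powr (- r) * real (card (strings_with_ones (2 * p) a))"
proof -
  have "1 \<le> r * (2 * real p)" using assms(2,3) mult_mono[of 1 r 1 "2 * real p"] by simp
  then have "30 \<le> t" using assms(4) real_sqrt_ge_one[of "r * (2 * real p)"] by linarith
  show ?thesis
  proof (cases "a = 0")
    case True
    then show ?thesis using \<open>30 \<le> t\<close> by simp
  next
    case False
    have "(30 * sqrt (r * (2 * real p)))\<^sup>2 \<le> t\<^sup>2"
      using assms(3,4) by (intro power_mono) auto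
    then have "900 * (r * (2 * real p)) \<le> t\<^sup>2"
      using assms(2,3) by (simp add: power_mult_distrib)
    have "r * (8 * real a) \<le> r * (8 * real p)" using assms(1,3) by simp
    also have "\<dots> \<le> 900 * (r * (2 * real p))" using assms(3) by simp
    finally have "r \<le> t\<^sup>2 / (8 * real a)"
      using \<open>900 * (r * (2 * real p)) \<le> t\<^sup>2\<close> False by (simp add: field_simps)
    then have "exp (- t\<^sup>2 / (8 * real a)) \<le> 2 powr (- r)"
      using exp_neg_le_two_powr_neg[of r "t\<^sup>2 / (8 * real a)"] assms(3) by simp
    then have "exp (- t\<^sup>2 / (8 * real a)) * real (card (strings_with_ones (2 * p) a))
        \<le> 2 powr (- r) * real (card (strings_with_ones (2 * p) a))"
      by (rule mult_right_mono) simp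
    then show ?thesis
      using card_few_mismatches_even[OF assms(1), of t] \<open>30 \<le> t\<close> by linarith
  qed
qed

section \<open>Deficient rounds are rare\<close>

lemma mismatches_append_short:
  "even (length Y) \<Longrightarrow> length Z \<le> 1 \<Longrightarrow> mismatches (Y @ Z) = mismatches Y"
  by (induction Y rule: mismatches.induct) (auto simp: le_Suc_eq length_Suc_conv)

lemma deficient_imp_few_mismatches:
  assumes "deficient r (Y @ Z)" "even (length Y)" "length Z \<le> 1" "0 \<le> r"
  shows "real (mismatches Y) < real (count_list Y True) / 2 + 1 - 30 * sqrt (r * real (length Y))"
proof -
  have "real (minority (Y @ Z)) \<le> real (count_list Y True) + 1"
    using minority_le_count_True[of "Y @ Z"] count_le_length[of Z True] assms(3) by simp
  moreover have "sqrt (r * real (length Y)) \<le> sqrt (r * real (length (Y @ Z)))"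
    using assms(4) by (intro real_sqrt_le_mono mult_left_mono) auto
  ultimately show ?thesis
    using assms(1) unfolding deficient_def mismatches_append_short[OF assms(2,3)] by linarith
qed

lemma card_strings_with_ones_Suc:
  "card {Y \<in> strings_with_ones (Suc m) a. Q Y}
   = (if a \<ge> 1 then card {Y \<in> strings_with_ones m (a - 1). Q (Y @ [True])} else 0)
     + card {Y \<in> strings_with_ones m a. Q (Y @ [False])}"
  unfolding strings_with_ones_def
  by (cases a) (simp_all add: card_length_Suc_bool_lists_snoc conj_assoc)

lemma not_deficient_if_minority_0:
  assumes "minority Y = 0" "0 \<le> r"
  shows "\<not> deficient r Y"
proof -
  have "0 \<le> sqrt (r * real (length Y))" using assms(2) by simp
  then show ?thesis
    using assms(1) of_nat_0_le_iff[of "mismatches Y"] unfolding deficient_def by linarith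
qed

lemma card_deficient_append_short_le:
  fixes r :: real
  assumes "r \<ge> 1" "a \<le> p" "1 \<le> p" "length Z \<le> 1"
  shows "real (card {Y \<in> strings_with_ones (2 * p) a. deficient r (Y @ Z)})
    \<le> 2 powr (- r) * real (card (strings_with_ones (2 * p) a))"
proof -
  define t where "t = 30 * sqrt (r * (2 * real p))"
  let ?few = "{Y \<in> strings_with_ones (2 * p) a. real (mismatches Y) < real a / 2 + 1 - t}"
  have "Y \<in> ?few" if "Y \<in> strings_with_ones (2 * p) a" "deficient r (Y @ Z)" for Y
    using deficient_imp_few_mismatches[OF that(2) _ assms(4)] that(1) assms(1)
    unfolding strings_with_ones_def t_def by simp
  then have "{Y \<in> strings_with_ones (2 * p) a. deficient r (Y @ Z)} \<subseteq> ?few" by blast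
  then have "real (card {Y \<in> strings_with_ones (2 * p) a. deficient r (Y @ Z)}) \<le> real (card ?few)"
    by (intro of_nat_mono card_mono finite_strings_with_ones)
  also have "\<dots> \<le> 2 powr (- r) * real (card (strings_with_ones (2 * p) a))"
    using card_few_mismatches_even_powr[OF assms(2,3,1)] unfolding t_def by simp
  finally show ?thesis .
qed

lemma card_deficient_le_minority_ones:
  fixes r :: real
  assumes "r \<ge> 1" "2 * a \<le> n"
  shows "real (card {Y \<in> strings_with_ones n a. deficient r Y}) \<le> 2 powr (- r) * real (card (strings_with_ones n a))"
proof (cases "a = 0")
  case True
  have "\<not> deficient r Y" if "Y \<in> strings_with_ones n a" for Y
    using that True minority_le_count_True[of Y] not_deficient_if_minority_0[of Y r] assms(1)
    unfolding strings_with_ones_def by simp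
  then have empty: "{Y \<in> strings_with_ones n a. deficient r Y} = {}" by blast
  show ?thesis unfolding empty by simp
next
  case False
  define p where "p = n div 2"
  have "a \<le> p" "1 \<le> p" using assms(2) False unfolding p_def by auto
  note bound = card_deficient_append_short_le[OF assms(1) _ \<open>1 \<le> p\<close>]
  have "n = 2 * p \<or> n = Suc (2 * p)" unfolding p_def by presburger
  then show ?thesis
  proof
    assume "n = 2 * p"
    then show ?thesis using bound[OF \<open>a \<le> p\<close>, of "[]"] by simp
  next
    assume n: "n = Suc (2 * p)"
    have "card (strings_with_ones n a)
        = card (strings_with_ones (2 * p) (a - 1)) + card (strings_with_ones (2 * p) a)"
      using card_strings_with_ones_Suc[of "2 * p" a "\<lambda>_. True"] False unfolding n by simp
    moreover have "a - 1 \<le> p" using \<open>a \<le> p\<close> by simp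
    ultimately show ?thesis
      using bound[of "a - 1" "[True]"] bound[of a "[False]"] \<open>a \<le> p\<close> False
      unfolding n card_strings_with_ones_Suc[of "2 * p" a] by (simp add: algebra_simps)
  qed
qed

lemma count_list_map_Not: "count_list (map Not Y) b = count_list Y (\<not> b)"
  by (induction Y) auto

lemma mismatches_map_Not: "mismatches (map Not Y) = mismatches Y"
  by (induction Y rule: mismatches.induct) auto

lemma deficient_map_Not: "deficient r (map Not Y) = deficient r Y"
  unfolding deficient_def minority_def mismatches_map_Not count_list_map_Not by (simp add: min.commute)

lemma card_strings_with_ones_complement:
  assumes "a \<le> n"
  shows "card {Y \<in> strings_with_ones n a. Q Y} = card {Y \<in> strings_with_ones n (n - a). Q (map Not Y)}"
proof (rule bij_betw_same_card[symmetric], rule bij_betw_byWitness[where f' = "map Not"])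
  have "count_list Y False = length Y - count_list Y True" for Y
    using count_list_True_False[of Y] by simp
  then show "map Not ` {Y \<in> strings_with_ones n (n - a). Q (map Not Y)} \<subseteq> {Y \<in> strings_with_ones n a. Q Y}"
    and "map Not ` {Y \<in> strings_with_ones n a. Q Y} \<subseteq> {Y \<in> strings_with_ones n (n - a). Q (map Not Y)}"
    using assms unfolding strings_with_ones_def by (auto simp: count_list_map_Not comp_def)
qed (auto simp: comp_def)

lemma card_deficient_le:
  fixes r :: real
  assumes "r \<ge> 1"
  shows "real (card {Y \<in> strings_with_ones n a. deficient r Y}) \<le> 2 powr (- r) * real (card (strings_with_ones n a))"
proof (cases "2 * a \<le> n")
  case False
  show ?thesis
  proof (cases "a \<le> n")
    case True
    have "2 * (n - a) \<le> n" using False by simp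
    then show ?thesis
      using card_deficient_le_minority_ones[OF assms, of "n - a" n]
        card_strings_with_ones_complement[OF True, of "deficient r"]
        card_strings_with_ones_complement[OF True, of "\<lambda>_. True"]
      by (simp add: deficient_map_Not)
  next
    case False
    then have "strings_with_ones n a = {}"
      unfolding strings_with_ones_def using count_le_length[of _ True] le_trans by fastforce
    then show ?thesis by simp
  qed
qed (rule card_deficient_le_minority_ones[OF assms])

lemma card_deficient_funpow_le:
  fixes r :: real
  assumes "r \<ge> 1"
  shows "real (card {Y \<in> strings_with_ones n a. deficient r ((pair_round ^^ k) Y)})
    \<le> 2 powr (- r) * real (card (strings_with_ones n a))"
proof (induction k arbitrary: n a)
  case 0
  then show ?case using card_deficient_le[OF assms] by simp
next
  case (Suc k)
  show ?case
    unfolding funpow_pair_round_Suc by (rule pair_round_preserves_density_bound) (rule Suc.IH)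
qed

section \<open>Union bound over the rounds\<close>

lemma minority_strings_with_ones: "X \<in> strings_with_ones (A + B) A \<Longrightarrow> minority X = min A B"
  using count_list_True_False[of X] unfolding strings_with_ones_def minority_def by simp

lemma deficient_round_if_costly:
  fixes r :: real
  assumes "r \<ge> 1" "X \<in> strings_with_ones (A + B) A" "A + B > 0"
    and "real (C_OP X) \<ge> real (A + B) - 2/3 * real (min A B) + 72 * sqrt (r * real (A + B))"
  shows "\<exists>k < nat \<lfloor>log 2 (real (A + B))\<rfloor>. deficient r ((pair_round ^^ k) X)"
proof -
  have "length X = A + B" using assms(2) unfolding strings_with_ones_def by simp
  then show ?thesis
    using C_OP_bound_if_never_deficient[OF assms(1), of X] assms(3,4) minority_strings_with_ones[OF assms(2)]
    by auto
qed

lemma card_costly_le: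
  fixes r :: real
  assumes "r \<ge> 1" "A + B > 0"
  shows "real (card {X \<in> strings_with_ones (A + B) A.
            real (C_OP X) \<ge> real (A + B) - 2/3 * real (min A B) + 72 * sqrt (r * real (A + B))})
    \<le> real (nat \<lfloor>log 2 (real (A + B))\<rfloor>) * (2 powr (- r) * real (card (strings_with_ones (A + B) A)))"
proof -
  define N where "N = A + B"
  define K where "K = nat \<lfloor>log 2 (real N)\<rfloor>"
  let ?S = "strings_with_ones N A"
  let ?costly = "{X \<in> ?S. real (C_OP X) \<ge> real N - 2/3 * real (min A B) + 72 * sqrt (r * real N)}"
  have "?costly \<subseteq> (\<Union>k<K. {X \<in> ?S. deficient r ((pair_round ^^ k) X)})"
    using deficient_round_if_costly[OF assms(1) _ assms(2)] unfolding N_def K_def by blast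
  then have "real (card ?costly) \<le> real (card (\<Union>k<K. {X \<in> ?S. deficient r ((pair_round ^^ k) X)}))"
    by (intro of_nat_mono card_mono) (auto intro: finite_strings_with_ones)
  also have "\<dots> \<le> (\<Sum>k<K. real (card {X \<in> ?S. deficient r ((pair_round ^^ k) X)}))"
    using card_UN_le[of "{..<K}" "\<lambda>k. {X \<in> ?S. deficient r ((pair_round ^^ k) X)}"]
    by (simp flip: of_nat_sum)
  also have "\<dots> \<le> (\<Sum>k<K. 2 powr (- r) * real (card ?S))"
    by (intro sum_mono card_deficient_funpow_le[OF assms(1)])
  also have "\<dots> = real K * (2 powr (- r) * real (card ?S))" by simp
  finally show ?thesis unfolding N_def K_def .
qed

theorem mainTheorem4:
  "\<exists>d::real. \<forall>N A B :: nat. \<forall>r::real.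
     N > 0 \<longrightarrow> A + B = N \<longrightarrow> r \<ge> 1 \<longrightarrow>
     real (card {X \<in> strings_with_ones N A.
              real (C_OP X) \<ge> real N - 2/3 * real (min A B) + d * sqrt (r * real N)})
       / real (card (strings_with_ones N A))
     \<le> 2 powr (-r) * log 2 (real N)"
proof (intro exI[of _ 72] allI impI)
  fix N A B :: nat and r :: real
  assume "N > 0" and N: "A + B = N" and "r \<ge> 1"
  let ?costly = "{X \<in> strings_with_ones N A.
    real (C_OP X) \<ge> real N - 2/3 * real (min A B) + 72 * sqrt (r * real N)}"
  have "replicate A True @ replicate B False \<in> strings_with_ones N A"
    using N unfolding strings_with_ones_def by (simp add: count_list_eq_length_filter)
  then have "card (strings_with_ones N A) > 0"
    using finite_strings_with_ones[of N A "\<lambda>_. True"] card_gt_0_iff by fastforce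
  have "real (card ?costly) \<le> real (nat \<lfloor>log 2 (real N)\<rfloor>) * (2 powr (- r) * real (card (strings_with_ones N A)))"
    using card_costly_le[OF \<open>r \<ge> 1\<close>, of A B] \<open>N > 0\<close> unfolding N .
  also have "\<dots> \<le> log 2 (real N) * (2 powr (- r) * real (card (strings_with_ones N A)))"
    using \<open>N > 0\<close> by (intro mult_right_mono) auto
  finally show "real (card ?costly) / real (card (strings_with_ones N A)) \<le> 2 powr (-r) * log 2 (real N)"
    using \<open>card (strings_with_ones N A) > 0\<close> by (simp add: pos_divide_le_eq mult_ac)
qed

end
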